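(* Let $\lambda\neq0$ be real and $n,k\ge1$ integers with $n\ge k$. Then $$\sum_{j=0}^{n}\binom{n+k-1}{j}S_{2,\lambda}^{[2]}(n-j+k,2k)\,\beta_{j,\lambda} =(n+k-1)!\Bigg\{\sum_{l=k}^{n}\frac{S_{2,\lambda}^{[2]}(l+k-2,2k-2)}{(l+k-2)!}(-\lambda)^{n-l} +\sum_{j=k}^{n}\sum_{l=k}^{j}\frac{S_{2,\lambda}^{[2]}(l+k-2,2k-2)\,\beta_{n-j,\lambda}\,(-\lambda)^{j-l+1}}{(l+k-2)!\,(n-j)!}\Bigg\}.$$
   Context: For real $\lambda\neq0$, $(x)_{0,\lambda}=1$, $(x)_{n,\lambda}=x(x-\lambda)\cdots(x-(n-1)\lambda)$ for $n\ge1$; $e_{\lambda}(t)=\sum_{k\ge0}(1)_{k,\lambda}\frac{t^k}{k!}=(1+\lambda t)^{1/\lambda}$ (formal power series). The $2$-truncated degenerate Stirling numbers of the second kind: for $k\ge0$, $\frac{1}{k!}(e_\lambda(t)-1-t)^k=\sum_{n\ge 2k}S^{[2]}_{2,\lambda}(n,2k)\frac{t^n}{n!}$, with $S^{[2]}_{2,\lambda}(n,2k)=0$ for $0\le n<2k$ (so $S^{[2]}_{2,\lambda}(n,0)=1$ if $n=0$ and $0$ otherwise). The degenerate Bernoulli numbers: $\frac{t}{e_\lambda(t)-1}=\sum_{n\ge0}\beta_{n,\lambda}\frac{t^n}{n!}$. *)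

theory Defs
  imports "HOL-Computational_Algebra.Formal_Power_Series"
begin

definition dfall :: "real \<Rightarrow> real \<Rightarrow> nat \<Rightarrow> real" where
  "dfall lam x n = (\<Prod>i<n. x - real i * lam)"

definition deg_exp :: "real \<Rightarrow> real fps" where
  "deg_exp lam = Abs_fps (\<lambda>k. dfall lam 1 k / fact k)"

(* 2-truncated degenerate Stirling numbers of the second kind S^{[2]}_{2,lambda}(n, m),
   defined for even second argument m = 2k by
   (1/k!) (e_lambda(t) - 1 - t)^k = sum_n S(n,2k) t^n/n!  *)
definition trunc_stirling2 :: "real \<Rightarrow> nat \<Rightarrow> nat \<Rightarrow> real" where
  "trunc_stirling2 lam n m =
     fact n * fps_nth ((deg_exp lam - 1 - fps_X) ^ (m div 2) / fps_const (fact (m div 2))) n"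

definition deg_bernoulli :: "real \<Rightarrow> nat \<Rightarrow> real" where
  "deg_bernoulli lam n = fact n * fps_nth (fps_X / (deg_exp lam - 1)) n"

end

(*
  Write H_k(t) = (e_lambda(t) - 1 - t)^k / k! and B(t) = t / (e_lambda(t) - 1). By the exponential
  generating function calculus the left-hand side is (n+k-1)! times the coefficient of t^(n+k-1)
  in H_k' B. Since (1 + lambda t) e_lambda' = e_lambda, we get (1 + lambda t) H_k' =
  H_(k-1) (e_lambda - 1 - lambda t), hence H_k' B = t H_(k-1) (1 + lambda t)^(-1) (1 - lambda B).
  Expanding (1 + lambda t)^(-1) = sum_i (-lambda)^i t^i and extracting the coefficient of
  t^(n+k-1) gives the two sums on the right; they start at l = k because H_(k-1) has order 2k-2.
*)

theory Submission
  imports Defs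
begin

unbundle fps_syntax

definition stirling_gf :: "real \<Rightarrow> nat \<Rightarrow> real fps" where
  "stirling_gf lam k = (deg_exp lam - 1 - fps_X) ^ k / fps_const (fact k)"

definition bernoulli_gf :: "real \<Rightarrow> real fps" where
  "bernoulli_gf lam = fps_X / (deg_exp lam - 1)"

lemma trunc_stirling2_conv_stirling_gf:
  "trunc_stirling2 lam m (2 * k) = fact m * stirling_gf lam k $ m"
  by (simp add: trunc_stirling2_def stirling_gf_def)

lemma deg_bernoulli_conv_bernoulli_gf:
  "deg_bernoulli lam j = fact j * bernoulli_gf lam $ j"
  by (simp add: deg_bernoulli_def bernoulli_gf_def)

lemma fps_power_nth_eq_0:
  fixes f :: "'a::semiring_1 fps"
  assumes "\<And>i. i < d \<Longrightarrow> f $ i = 0" and "m < k * d"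
  shows "(f ^ k) $ m = 0"
proof (cases "f = 0")
  case True
  with assms(2) show ?thesis by (cases k) simp_all
next
  case False
  then have "d \<le> subdegree f" using assms(1) by (rule subdegree_geI)
  with assms(2) have "m < k * subdegree f"
    by (meson less_le_trans mult_le_mono2)
  then show ?thesis by (rule fps_pow_nth_below_subdegree)
qed

lemma fps_mult_nth_from:
  fixes f g :: "'a::semiring_0 fps"
  assumes "\<And>i. i < d \<Longrightarrow> f $ i = 0"
  shows "(f * g) $ m = (\<Sum>i=d..m. f $ i * g $ (m - i))"
  unfolding fps_mult_nth by (rule sum.mono_neutral_right) (auto simp: assms)

lemma fact_fps_deriv_nth:
  fixes f :: "'a::{comm_semiring_1,semiring_char_0} fps"
  shows "fact m * fps_deriv f $ m = fact (Suc m) * f $ Suc m"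
  by (simp add: fact_Suc algebra_simps)

lemma fact_fps_mult_nth:
  fixes f g :: "'a::field_char_0 fps"
  shows "fact m * (f * g) $ m
       = (\<Sum>j=0..m. of_nat (m choose j) * (fact j * f $ j) * (fact (m - j) * g $ (m - j)))"
  unfolding fps_mult_nth sum_distrib_left
  by (rule sum.cong) (simp_all add: binomial_fact)

lemma geometric_fps_times_linear:
  fixes c :: "'a::comm_ring_1"
  shows "Abs_fps (\<lambda>i. (- c) ^ i) * (1 + fps_const c * fps_X) = 1"
proof (rule fps_ext)
  fix m
  have "Abs_fps (\<lambda>i. (- c) ^ i) * (1 + fps_const c * fps_X)
      = Abs_fps (\<lambda>i. (- c) ^ i) + fps_const c * (fps_X * Abs_fps (\<lambda>i. (- c) ^ i))"
    by (simp add: algebra_simps)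
  then show "(Abs_fps (\<lambda>i. (- c) ^ i) * (1 + fps_const c * fps_X)) $ m = 1 $ m"
    by (cases m) simp_all
qed

lemma deg_exp_nth_0 [simp]: "deg_exp lam $ 0 = 1"
  and deg_exp_nth_1 [simp]: "deg_exp lam $ Suc 0 = 1"
  by (simp_all add: deg_exp_def dfall_def)

lemma deg_exp_nth_Suc:
  "real (Suc m) * deg_exp lam $ Suc m = (1 - real m * lam) * deg_exp lam $ m"
  by (simp add: deg_exp_def dfall_def fact_Suc field_simps del: of_nat_Suc)

lemma fps_deriv_deg_exp_nth:
  "fps_deriv (deg_exp lam) $ m = (1 - real m * lam) * deg_exp lam $ m"
  using deg_exp_nth_Suc[of m lam] by simp

lemma fps_deriv_deg_exp:
  "(1 + fps_const lam * fps_X) * fps_deriv (deg_exp lam) = deg_exp lam"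
proof (rule fps_ext)
  fix m
  show "((1 + fps_const lam * fps_X) * fps_deriv (deg_exp lam)) $ m = deg_exp lam $ m"
  proof (cases m)
    case 0
    then show ?thesis by (simp add: fps_deriv_deg_exp_nth)
  next
    case (Suc p)
    have "((1 + fps_const lam * fps_X) * fps_deriv (deg_exp lam)) $ m
        = fps_deriv (deg_exp lam) $ Suc p + lam * fps_deriv (deg_exp lam) $ p"
      by (simp add: distrib_right mult.assoc Suc)
    also have "\<dots> = (1 - real (Suc p) * lam) * deg_exp lam $ Suc p
                   + lam * (real (Suc p) * deg_exp lam $ Suc p)"
      by (simp only: fps_deriv_deg_exp_nth deg_exp_nth_Suc)
    also have "\<dots> = deg_exp lam $ m" by (simp add: Suc algebra_simps)
    finally show ?thesis .
  qed
qed

lemma stirling_gf_nth_eq_0: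
  assumes "m < 2 * k"
  shows "stirling_gf lam k $ m = 0"
proof -
  have "(deg_exp lam - 1 - fps_X) $ i = 0" if "i < 2" for i
    using that by (auto simp: less_2_cases_iff)
  from fps_power_nth_eq_0[OF this] assms show ?thesis
    by (simp add: stirling_gf_def mult.commute)
qed

lemma fps_deriv_stirling_gf:
  "fps_deriv (stirling_gf lam (Suc k)) = stirling_gf lam k * (fps_deriv (deg_exp lam) - 1)"
proof -
  define F where "F = deg_exp lam - 1 - fps_X"
  have c: "inverse (fact (Suc k)) * of_nat (Suc k) = (inverse (fact k) :: real)"
    by (simp add: fact_Suc del: of_nat_Suc)
  have "fps_deriv (stirling_gf lam (Suc k))
      = fps_const (inverse (fact (Suc k))) * (fps_const (of_nat (Suc k)) * fps_deriv F * F ^ k)"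
    unfolding stirling_gf_def F_def[symmetric]
    by (simp only: divide_fps_const fps_deriv_mult_const_left fps_deriv_power diff_Suc_1)
  also have "\<dots> = fps_const (inverse (fact (Suc k)) * of_nat (Suc k)) * F ^ k * fps_deriv F"
    by (simp only: fps_const_mult[symmetric] mult.assoc mult.commute[of "fps_deriv F"])
  also have "\<dots> = stirling_gf lam k * (fps_deriv (deg_exp lam) - 1)"
    unfolding c by (simp add: stirling_gf_def F_def)
  finally show ?thesis .
qed

lemma bernoulli_gf_times:
  "bernoulli_gf lam * (deg_exp lam - 1) = fps_X"
proof -
  have E1: "(deg_exp lam - 1) $ 1 = 1"
    by simp
  then have "deg_exp lam - 1 \<noteq> 0" by (metis fps_zero_nth zero_neq_one)
  moreover have "subdegree (deg_exp lam - 1) \<le> 1"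
    by (rule subdegree_leI) (simp add: E1)
  ultimately show ?thesis
    unfolding bernoulli_gf_def by (intro fps_times_divide_eq) simp_all
qed

lemma fps_deriv_stirling_gf_times_bernoulli_gf:
  "fps_deriv (stirling_gf lam (Suc k)) * bernoulli_gf lam
     = fps_X * stirling_gf lam k * Abs_fps (\<lambda>i. (- lam) ^ i) * (1 - fps_const lam * bernoulli_gf lam)"
proof -
  define U where "U = 1 + fps_const lam * fps_X"
  define I where "I = Abs_fps (\<lambda>i. (- lam) ^ i)"
  define G where "G = stirling_gf lam k"
  define B where "B = bernoulli_gf lam"
  have "U * fps_deriv (stirling_gf lam (Suc k)) = G * (U * fps_deriv (deg_exp lam)) - G * U"
    by (simp add: fps_deriv_stirling_gf G_def algebra_simps)
  also have "\<dots> = G * deg_exp lam - G * U"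
    by (simp only: U_def fps_deriv_deg_exp)
  also have "\<dots> = G * (deg_exp lam - 1) - fps_const lam * fps_X * G"
    by (simp add: U_def algebra_simps)
  finally have UH: "U * fps_deriv (stirling_gf lam (Suc k))
                     = G * (deg_exp lam - 1) - fps_const lam * fps_X * G" .
  have "fps_deriv (stirling_gf lam (Suc k)) * B = I * (U * fps_deriv (stirling_gf lam (Suc k))) * B"
    using geometric_fps_times_linear[of lam] by (simp add: I_def U_def mult.assoc)
  also have "\<dots> = I * G * (B * (deg_exp lam - 1)) - fps_const lam * fps_X * G * I * B"
    by (simp add: UH algebra_simps)
  also have "\<dots> = fps_X * G * I * (1 - fps_const lam * B)"
    by (simp only: B_def bernoulli_gf_times) (simp add: algebra_simps)
  finally show ?thesis by (simp add: I_def G_def B_def)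
qed

lemma sum_shift_k_minus_2:
  fixes f :: "nat \<Rightarrow> 'a::comm_monoid_add"
  assumes "1 \<le> k" and "k \<le> j"
  shows "(\<Sum>l=k..j. f (l + k - 2)) = (\<Sum>i=2*k-2..j+k-2. f i)"
  by (rule sum.reindex_bij_witness[of _ "\<lambda>i. i + 2 - k" "\<lambda>l. l + k - 2"]) (use assms in auto)

lemma binomial_sum_trunc_stirling2_deg_bernoulli:
  assumes "1 \<le> k"
  shows "(\<Sum>j=0..n. real ((n + k - 1) choose j) * trunc_stirling2 lam (n - j + k) (2 * k)
            * deg_bernoulli lam j)
       = fact (n + k - 1) * (fps_deriv (stirling_gf lam k) * bernoulli_gf lam) $ (n + k - 1)"
proof -
  define N where "N = n + k - 1"
  have "fact N * (fps_deriv (stirling_gf lam k) * bernoulli_gf lam) $ N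
      = (\<Sum>j=0..N. real (N choose j) * (fact (Suc (N - j)) * stirling_gf lam k $ Suc (N - j))
                                       * (fact j * bernoulli_gf lam $ j))"
    unfolding mult.commute[of "fps_deriv _"] fact_fps_mult_nth fact_fps_deriv_nth
    by (simp add: mult_ac)
  also have "\<dots> = (\<Sum>j=0..n. real (N choose j) * trunc_stirling2 lam (n - j + k) (2 * k)
                                       * deg_bernoulli lam j)"
  proof (rule sum.mono_neutral_cong_right)
    show "\<forall>j\<in>{0..N} - {0..n}. real (N choose j) * (fact (Suc (N - j)) * stirling_gf lam k $ Suc (N - j))
            * (fact j * bernoulli_gf lam $ j) = 0"
      using assms by (auto simp: N_def stirling_gf_nth_eq_0)
    show "real (N choose j) * (fact (Suc (N - j)) * stirling_gf lam k $ Suc (N - j))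
            * (fact j * bernoulli_gf lam $ j)
        = real (N choose j) * trunc_stirling2 lam (n - j + k) (2 * k) * deg_bernoulli lam j"
      if "j \<in> {0..n}" for j
    proof -
      have "n - j + k = Suc (N - j)" using assms that by (auto simp: N_def)
      then show ?thesis
        by (simp add: trunc_stirling2_conv_stirling_gf deg_bernoulli_conv_bernoulli_gf)
    qed
  qed (use assms in \<open>auto simp: N_def\<close>)
  finally show ?thesis by (simp add: N_def)
qed

lemma sum_trunc_stirling2_geometric:
  assumes "1 \<le> k" and "k \<le> j"
  shows "(\<Sum>l=k..j. trunc_stirling2 lam (l + k - 2) (2 * k - 2) / fact (l + k - 2) * (- lam) ^ (j - l))
       = (stirling_gf lam (k - 1) * Abs_fps (\<lambda>i. (- lam) ^ i)) $ (j + k - 2)"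
proof -
  define G where "G = stirling_gf lam (k - 1)"
  have "(G * Abs_fps (\<lambda>i. (- lam) ^ i)) $ (j + k - 2)
      = (\<Sum>i=2*k-2..j+k-2. G $ i * (- lam) ^ (j + k - 2 - i))"
    by (subst fps_mult_nth_from[where d = "2 * k - 2"])
       (simp_all add: G_def stirling_gf_nth_eq_0 right_diff_distrib')
  also have "\<dots> = (\<Sum>l=k..j. G $ (l + k - 2) * (- lam) ^ (j + k - 2 - (l + k - 2)))"
    using sum_shift_k_minus_2[OF assms, of "\<lambda>i. G $ i * (- lam) ^ (j + k - 2 - i)"] by simp
  also have "\<dots> = (\<Sum>l=k..j. trunc_stirling2 lam (l + k - 2) (2 * k - 2) / fact (l + k - 2)
                                  * (- lam) ^ (j - l))"
  proof (rule sum.cong[OF refl])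
    fix l assume "l \<in> {k..j}"
    then have "j + k - 2 - (l + k - 2) = j - l" using assms by auto
    moreover have "2 * k - 2 = 2 * (k - 1)" by simp
    ultimately show "G $ (l + k - 2) * (- lam) ^ (j + k - 2 - (l + k - 2))
        = trunc_stirling2 lam (l + k - 2) (2 * k - 2) / fact (l + k - 2) * (- lam) ^ (j - l)"
      by (simp only: G_def trunc_stirling2_conv_stirling_gf) simp
  qed
  finally show ?thesis by (simp add: G_def)
qed

lemma double_sum_trunc_stirling2_deg_bernoulli:
  assumes "1 \<le> k" and "k \<le> n"
  shows "(\<Sum>j=k..n. \<Sum>l=k..j. trunc_stirling2 lam (l + k - 2) (2 * k - 2) * deg_bernoulli lam (n - j)
                 * (- lam) ^ (j - l + 1) / (fact (l + k - 2) * fact (n - j)))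
       = - lam * (stirling_gf lam (k - 1) * Abs_fps (\<lambda>i. (- lam) ^ i) * bernoulli_gf lam) $ (n + k - 2)"
proof -
  define P where "P = stirling_gf lam (k - 1) * Abs_fps (\<lambda>i. (- lam) ^ i)"
  define B where "B = bernoulli_gf lam"
  have P_eq_0: "P $ a = 0" if "a < 2 * k - 2" for a
    unfolding P_def
    by (subst fps_mult_nth_from[where d = "2 * k - 2"])
       (use that in \<open>simp_all add: stirling_gf_nth_eq_0 right_diff_distrib'\<close>)
  have "(\<Sum>j=k..n. \<Sum>l=k..j. trunc_stirling2 lam (l + k - 2) (2 * k - 2) * deg_bernoulli lam (n - j)
                 * (- lam) ^ (j - l + 1) / (fact (l + k - 2) * fact (n - j)))
      = (\<Sum>j=k..n. - lam * (P $ (j + k - 2) * B $ (n + k - 2 - (j + k - 2))))"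
  proof (rule sum.cong[OF refl])
    fix j assume j: "j \<in> {k..n}"
    have "(\<Sum>l=k..j. trunc_stirling2 lam (l + k - 2) (2 * k - 2) * deg_bernoulli lam (n - j)
                 * (- lam) ^ (j - l + 1) / (fact (l + k - 2) * fact (n - j)))
        = - lam * B $ (n - j) * (\<Sum>l=k..j. trunc_stirling2 lam (l + k - 2) (2 * k - 2)
                                              / fact (l + k - 2) * (- lam) ^ (j - l))"
      by (simp add: sum_distrib_left deg_bernoulli_conv_bernoulli_gf B_def field_simps)
    also have "\<dots> = - lam * (P $ (j + k - 2) * B $ (n + k - 2 - (j + k - 2)))"
    proof -
      have "k \<le> j" and "n + k - 2 - (j + k - 2) = n - j" using j assms by auto
      then show ?thesis
        unfolding sum_trunc_stirling2_geometric[OF assms(1) \<open>k \<le> j\<close>] P_def by simp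
    qed
    finally show "(\<Sum>l=k..j. trunc_stirling2 lam (l + k - 2) (2 * k - 2) * deg_bernoulli lam (n - j)
                 * (- lam) ^ (j - l + 1) / (fact (l + k - 2) * fact (n - j)))
        = - lam * (P $ (j + k - 2) * B $ (n + k - 2 - (j + k - 2)))" .
  qed
  also have "\<dots> = - lam * (\<Sum>a=2*k-2..n+k-2. P $ a * B $ (n + k - 2 - a))"
    by (simp only: sum_distrib_left[symmetric]
          sum_shift_k_minus_2[OF assms, of "\<lambda>a. P $ a * B $ (n + k - 2 - a)"])
  also have "\<dots> = - lam * (P * B) $ (n + k - 2)"
    using fps_mult_nth_from[where d = "2 * k - 2" and f = P and g = B] P_eq_0 by simp
  finally show ?thesis by (simp add: P_def B_def)
qed

theorem theorem6:
  fixes lam :: real and n k :: nat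
  assumes "lam \<noteq> 0" and "k \<ge> 1" and "n \<ge> 1" and "n \<ge> k"
  shows "(\<Sum>j=0..n. real ((n + k - 1) choose j) * trunc_stirling2 lam (n - j + k) (2 * k)
            * deg_bernoulli lam j)
       = fact (n + k - 1) *
         ((\<Sum>l=k..n. trunc_stirling2 lam (l + k - 2) (2 * k - 2) / fact (l + k - 2) * (- lam) ^ (n - l))
          + (\<Sum>j=k..n. \<Sum>l=k..j. trunc_stirling2 lam (l + k - 2) (2 * k - 2) * deg_bernoulli lam (n - j)
                 * (- lam) ^ (j - l + 1) / (fact (l + k - 2) * fact (n - j))))"
proof -
  define P where "P = stirling_gf lam (k - 1) * Abs_fps (\<lambda>i. (- lam) ^ i)"
  have N: "n + k - 1 = Suc (n + k - 2)" using assms(2,4) by simp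
  have "fps_deriv (stirling_gf lam k) * bernoulli_gf lam
      = fps_X * (P - fps_const lam * (P * bernoulli_gf lam))"
    using fps_deriv_stirling_gf_times_bernoulli_gf[of lam "k - 1"] assms(2)
    by (simp add: P_def algebra_simps)
  then have "(fps_deriv (stirling_gf lam k) * bernoulli_gf lam) $ (n + k - 1)
           = P $ (n + k - 2) + - lam * (P * bernoulli_gf lam) $ (n + k - 2)"
    unfolding N by simp
  then show ?thesis
    unfolding binomial_sum_trunc_stirling2_deg_bernoulli[OF assms(2)]
      sum_trunc_stirling2_geometric[OF assms(2,4)]
      double_sum_trunc_stirling2_deg_bernoulli[OF assms(2,4)] P_def
    by simp
qed

end
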